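(* Let $c\ge\lceil(2n-1)/3\rceil$ and let $\mathbf{s}_n\in\mathcal{B}(n,c,d)$ with $d=n-c$. Then $\mathbf{s}_n\in\mathcal{R}(n,c)$ if and only if $\mathbf{s}_{[d:n]}=(s_d,\dots,s_{n-1})$ cannot be expressed as $(s_0,s_1,\dots,s_{b-1})^l$ for any aperiodic sequence $(s_0,\dots,s_{b-1})$, where $b>1$ is a proper divisor of $c$.
   Context: All sequences are binary (entries in $\mathbb{Z}_2$), $\overline{x}=x\oplus1$, $x\bmod d$ is the least nonnegative residue, and $\mathbf{a}^q$ is the concatenation of $q$ copies of $\mathbf a$. For $\mathbf{s}_n=(s_0,\dots,s_{n-1})$, $\mathbf{s}_j=(s_0,\dots,s_{j-1})$ and $\mathbf{s}_{[i:j]}=(s_i,\dots,s_{j-1})$. A length-$m$ sequence is periodic if it is the concatenation of $m/e$ copies of a length-$e$ sequence for a proper divisor $e$ of $m$, aperiodic otherwise. Right circular shift: $R^k(\mathbf{s}_n)=(s_{n-k},\dots,s_{n-1},s_0,\dots,s_{n-k-1})$, $0\le k<n$. For $c\ge\lfloor n/2\rfloor$ and $1\le d\le\min\{n-c,\lfloor n/2\rfloor\}$, $\mathcal{B}(n,c,d)$ is the set of aperiodic length-$n$ sequences $\mathbf{s}_n$ with $\mathbf{s}_d$ aperiodic and $\mathbf{s}_{c+d}=(s_0,\dots,s_{d-1})^q(s_0,\dots,s_{r-1},\overline{s_r})$, where $q=\lfloor(c+d-1)/d\rfloor$, $r=c+d-1-qd$, and $s_{c+d},\dots,s_{n-1}$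 are arbitrary. $\mathcal{B}(n,c)=\bigcup_{d=1}^{\min\{n-c,\lfloor n/2\rfloor\}}\mathcal{B}(n,c,d)$. For $\mathbf{s}_n\in\mathcal{B}(n,c,d)$, $add(\mathbf{s}_n)$ is the integer $t\ge0$ such that $s_{n-1-i}=s_{(d-1-i)\bmod d}$ for $0\le i<t$ and $s_{n-1-t}\neq s_{(d-1-t)\bmod d}$. For $\mathbf{s}_n\in\mathcal{B}(n,c)$, $E(\mathbf{s}_n)=\{R^k(\mathbf{s}_n):0\le k<n\}\cap\mathcal{B}(n,c)$, and $\mathcal{R}(n,c)$ is the set of all $\mathbf{s}\in\mathcal{B}(n,c)$ with $add(\mathbf{s})\ge add(\mathbf a)$ for every $\mathbf a\in E(\mathbf s)$ (the sequence representatives). *)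

theory Defs
  imports Main
begin

text \<open>Binary sequences are lists of booleans (False = 0, True = 1); complement is Not.\<close>

definition periodic :: "bool list \<Rightarrow> bool" where
  "periodic s \<longleftrightarrow> (\<exists>e. 0 < e \<and> e < length s \<and> e dvd length s \<and>
       s = concat (replicate (length s div e) (take e s)))"

definition aperiodic :: "bool list \<Rightarrow> bool" where
  "aperiodic s \<longleftrightarrow> \<not> periodic s"

definition rshift :: "nat \<Rightarrow> bool list \<Rightarrow> bool list" where
  "rshift k s = drop (length s - k) s @ take (length s - k) s"

definition Bd :: "nat \<Rightarrow> nat \<Rightarrow> nat \<Rightarrow> bool list set" where
  "Bd n c d = {s. n div 2 \<le> c \<and> 1 \<le> d \<and> d \<le> min (n - c) (n div 2) \<and>
      length s = n \<and> aperiodic s \<and> aperiodic (take d s) \<and>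
      (let q = (c + d - 1) div d; r = c + d - 1 - q * d in
        take (c + d) s = concat (replicate q (take d s)) @ take r s @ [\<not> s ! r])}"

definition B :: "nat \<Rightarrow> nat \<Rightarrow> bool list set" where
  "B n c = (\<Union>d\<in>{1..min (n - c) (n div 2)}. Bd n c d)"

text \<open>add(s) for s in B(n,c,d): the least t with s_{n-1-t} \<noteq> s_{(d-1-t) mod d}
  (indices taken as least nonnegative residues); value n if no such t < n exists.\<close>
definition add :: "nat \<Rightarrow> bool list \<Rightarrow> nat" where
  "add d s = (LEAST t. length s \<le> t \<or>
      s ! (length s - 1 - t) \<noteq> s ! nat ((int d - 1 - int t) mod int d))"

definition E :: "nat \<Rightarrow> nat \<Rightarrow> bool list \<Rightarrow> bool list set" where
  "E n c s = {rshift k s | k. k < n} \<inter> B n c"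

text \<open>Sequence representatives R(n,c). The d with s in B(n,c,d) is unique, so add of an
  element of B(n,c) is taken w.r.t. any (the) d for which it lies in B(n,c,d).\<close>
definition R :: "nat \<Rightarrow> nat \<Rightarrow> bool list set" where
  "R n c = {s. s \<in> B n c \<and> (\<forall>a\<in>E n c s. \<forall>d1 d2.
      s \<in> Bd n c d1 \<longrightarrow> a \<in> Bd n c d2 \<longrightarrow> add d2 a \<le> add d1 s)}"

end

(*
  Both sides of the equivalence hold for every s in B(n,c,d) once c >= 2d - 1.

  Read s as a cyclic word W. Membership in B(n,c,d) says that W has period d on [0, c+d-1)
  and that this period breaks at c+d-1; a rotation of s lying in B(n,c,d') yields a second
  window, of period d' <= d, breaking at some position e. The Fine-Wilf theorem (periods p
  and q on a window of length p + q - gcd p q give the period gcd p q) together with the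
  aperiodicity of the first d symbols rules out every position of e except c+d-1, and then
  forces d' = d. So s is the only rotation of itself in B(n,c) and is its own representative.

  Likewise, if s_[d:n] were a power of a prefix of length b with 1 < b < c, then W would
  have the periods b and d on [d, n-1), hence the period gcd b d there, which would make
  W(n-1) = W(c-1) and contradict the break.
*)
theory Submission
  imports Defs
begin

definition period_on :: "(int \<Rightarrow> 'a) \<Rightarrow> int \<Rightarrow> int \<Rightarrow> int \<Rightarrow> bool" where
  "period_on f p a b \<longleftrightarrow> (\<forall>z. a \<le> z \<longrightarrow> z + p < b \<longrightarrow> f z = f (z + p))"

lemma period_onD: "period_on f p a b \<Longrightarrow> a \<le> z \<Longrightarrow> z + p < b \<Longrightarrow> f z = f (z + p)"
  unfolding period_on_def by blast

lemma period_on_subwindow: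
  "period_on f p a b \<Longrightarrow> a \<le> a' \<Longrightarrow> b' \<le> b \<Longrightarrow> period_on f p a' b'"
  unfolding period_on_def by force

lemma period_on_shift: "period_on (\<lambda>z. f (z + t)) p a b \<longleftrightarrow> period_on f p (a + t) (b + t)"
proof
  assume "period_on (\<lambda>z. f (z + t)) p a b"
  show "period_on f p (a + t) (b + t)"
    unfolding period_on_def
  proof (intro allI impI)
    fix z assume "a + t \<le> z" "z + p < b + t"
    then have "f (z - t + t) = f (z - t + p + t)"
      using \<open>period_on (\<lambda>z. f (z + t)) p a b\<close> by (intro period_onD[where f = "\<lambda>z. f (z + t)"]) auto
    then show "f z = f (z + p)" by (simp add: algebra_simps)
  qed
next
  assume "period_on f p (a + t) (b + t)"
  then show "period_on (\<lambda>z. f (z + t)) p a b"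
    unfolding period_on_def by (simp add: algebra_simps)
qed

lemma period_on_iterate:
  assumes "period_on f p a b" "0 \<le> p" "a \<le> z" "z + int k * p < b"
  shows "f z = f (z + int k * p)"
  using assms(4)
proof (induction k)
  case (Suc k)
  have "f z = f (z + int k * p)"
    using Suc assms(2) by (simp add: algebra_simps)
  also have "\<dots> = f (z + int k * p + p)"
  proof (rule period_onD[OF assms(1)])
    have "0 \<le> int k * p" using assms(2) by simp
    then show "a \<le> z + int k * p" using assms(3) by linarith
    show "z + int k * p + p < b" using Suc.prems by (simp add: algebra_simps)
  qed
  finally show ?case by (simp add: algebra_simps)
qed simp

lemma period_on_dvd_diff:
  assumes "period_on f p a b" "0 < p" "a \<le> z" "z < b" "a \<le> z'" "z' < b" "p dvd z' - z"
  shows "f z = f z'"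
proof -
  have sym: "f x = f y" if "x \<le> y" "a \<le> x" "y < b" "p dvd y - x" for x y
  proof -
    obtain k where k: "y - x = p * k" using \<open>p dvd y - x\<close> by (elim dvdE)
    have "0 \<le> p * k" using k that(1) by simp
    then have "0 \<le> k" using \<open>0 < p\<close> by (simp add: zero_le_mult_iff)
    define m where "m = nat k"
    have y: "y = x + int m * p" using k \<open>0 \<le> k\<close> unfolding m_def by (simp add: algebra_simps)
    show ?thesis unfolding y using period_on_iterate[OF assms(1), of x m] that(2,3) assms(2) y by simp
  qed
  show ?thesis
  proof (cases "z \<le> z'")
    case True then show ?thesis using sym assms by blast
  next
    case False then show ?thesis using sym[of z' z] assms by (simp add: dvd_diff_commute)
  qed
qed

lemma period_on_diff:
  assumes P: "period_on f p a b" and Q: "period_on f q a b" and "p < q"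
  shows "period_on f (q - p) a (b - p)"
  unfolding period_on_def
proof (intro allI impI)
  fix z assume z: "a \<le> z" "z + (q - p) < b - p"
  have "f z = f (z + q)" using period_onD[OF Q] z by simp
  also have "\<dots> = f (z + (q - p))" using period_onD[OF P, of "z + (q - p)"] z \<open>p < q\<close> by simp
  finally show "f z = f (z + (q - p))" .
qed

text \<open>Every residue class modulo \<open>p\<close> meets \<open>[a, a + p)\<close>, which lies in the shortened window.\<close>
lemma period_on_extend:
  assumes P: "period_on f p a b" and G: "period_on f g a (b - p)"
    and "0 < p" "0 < g" "g dvd p" "2 * p \<le> b - a"
  shows "period_on f g a b"
  unfolding period_on_def
proof (intro allI impI)
  fix z assume z: "a \<le> z" "z + g < b"
  define r where "r x = a + (x - a) mod p" for x
  have r: "a \<le> r x" "r x < b - p" "p dvd r x - x" for x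
  proof -
    have "0 \<le> (x - a) mod p" "(x - a) mod p < p" using \<open>0 < p\<close> by simp_all
    then show "a \<le> r x" "r x < b - p" using assms(6) unfolding r_def by linarith+
    have "(r x - a) mod p = (x - a) mod p" unfolding r_def by simp
    then show "p dvd r x - x" by (simp add: mod_eq_dvd_iff)
  qed
  have rb: "r x < b" for x using r(2)[of x] \<open>0 < p\<close> by linarith
  have zb: "z < b" using z \<open>0 < g\<close> by linarith
  have "f z = f (r z)"
    by (rule period_on_dvd_diff[OF P \<open>0 < p\<close> z(1) zb r(1) rb r(3)])
  also have "\<dots> = f (r (z + g))"
  proof (rule period_on_dvd_diff[OF G \<open>0 < g\<close> r(1,2) r(1,2)])
    have "g dvd r (z + g) - (z + g)" "g dvd r z - z"
      using dvd_trans[OF \<open>g dvd p\<close> r(3)] by blast+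
    from dvd_add[OF dvd_diff[OF this] dvd_refl]
    have "g dvd (r (z + g) - (z + g)) - (r z - z) + g" .
    then show "g dvd r (z + g) - r z" by (simp add: algebra_simps)
  qed
  also have "\<dots> = f (z + g)"
    using period_on_dvd_diff[OF P \<open>0 < p\<close> r(1) rb _ z(2)] r(3) z(1) \<open>0 < g\<close>
    by (simp add: dvd_diff_commute)
  finally show "f z = f (z + g)" .
qed

theorem fine_wilf:
  assumes "period_on f p a b" "period_on f q a b" "0 < p" "0 < q"
    and "p + q - gcd p q \<le> b - a"
  shows "period_on f (gcd p q) a b"
  using assms
proof (induction "nat (p + q)" arbitrary: p q b rule: less_induct)
  case less
  have ordered: "period_on f (gcd p' q') a b"
    if sum: "p' + q' = p + q" and P: "period_on f p' a b" and Q: "period_on f q' a b"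
      and pq: "0 < p'" "p' < q'" and len: "p' + q' - gcd p' q' \<le> b - a" for p' q'
  proof -
    have gcd_eq: "gcd p' (q' - p') = gcd p' q'" by (metis gcd.commute gcd_diff1)
    have "gcd p' q' \<le> q' - p'" using pq by (simp add: zdvd_imp_le)
    have "period_on f (gcd p' (q' - p')) a (b - p')"
    proof (rule less.hyps)
      show "period_on f p' a (b - p')" using P by (rule period_on_subwindow) (use pq in auto)
      show "period_on f (q' - p') a (b - p')" using P Q pq(2) by (rule period_on_diff)
    qed (use sum pq len gcd_eq in auto)
    then show ?thesis
      using period_on_extend[OF P] pq len gcd_eq \<open>gcd p' q' \<le> q' - p'\<close> by simp
  qed
  consider "p = q" | "p < q" | "q < p" by linarith
  then show ?case
  proof cases
    case 1
    then show ?thesis using less.prems by simp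
  next
    case 2
    then show ?thesis using ordered less.prems by blast
  next
    case 3
    then show ?thesis using ordered[of q p] less.prems by (simp add: gcd.commute add.commute)
  qed
qed

definition period_break :: "(int \<Rightarrow> 'a) \<Rightarrow> int \<Rightarrow> int \<Rightarrow> int \<Rightarrow> bool" where
  "period_break f p a e \<longleftrightarrow> period_on f p a e \<and> f e \<noteq> f (e - p)"

lemma period_break_shift:
  "period_break (\<lambda>z. f (z + t)) p a e \<longleftrightarrow> period_break f p (a + t) (e + t)"
  unfolding period_break_def period_on_shift by (simp add: algebra_simps)

text \<open>\<open>W\<close> is a cyclic word of length \<open>c + d\<close>. Its window starting at \<open>0\<close> is the
  \<open>B(c + d, c, d)\<close> pattern, and a rotation lying in \<open>B(c + d, c, d')\<close> contributes a
  second window of period \<open>d'\<close>, ending with a break at \<open>e\<close>.\<close>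
locale period_break_pair =
  fixes W :: "int \<Rightarrow> 'a" and c d d' e :: int
  assumes cyclic: "\<And>z. W (z mod (c + d)) = W z"
    and d'_pos: "0 < d'" and d'_le: "d' \<le> d"
    and c_large: "2 * d - 1 \<le> c" "d < c"
    and break_0: "period_break W d 0 (c + d - 1)"
    and break_e: "period_break W d' (e - (c + d' - 1)) e"
    and primitive: "\<And>g. 0 < g \<Longrightarrow> g < d \<Longrightarrow> g dvd d \<Longrightarrow> \<not> period_on W g 0 d"
    and e_range: "0 \<le> e" "e < c + d"
begin

lemma d_pos: "0 < d"
  using d'_pos d'_le by simp

lemma gcd_bounds: "0 < gcd d d'" "gcd d d' \<le> d'"
  using d'_pos by (simp_all add: zdvd_imp_le)

lemma W_add_length: "W (z + (c + d)) = W z"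
  using cyclic[of "z + (c + d)"] cyclic[of z] by simp

lemma period_0: "period_on W d 0 (c + d - 1)"
  using break_0 unfolding period_break_def by simp

lemma period_e: "period_on W d' (e - (c + d' - 1)) e"
  using break_e unfolding period_break_def by simp

lemma period_0D: "d \<le> z \<Longrightarrow> z < c + d - 1 \<Longrightarrow> W (z - d) = W z"
  using period_onD[OF period_0, of "z - d"] by simp

lemma period_eD: "e - c + 1 \<le> z \<Longrightarrow> z < e \<Longrightarrow> W (z - d') = W z"
  using period_onD[OF period_e, of "z - d'"] by simp

lemma break_at_minus_1: "W (-1) \<noteq> W (c - 1)"
  using break_0 W_add_length[of "-1"] unfolding period_break_def by simp

lemma break_at_e: "W e \<noteq> W (e - d')"
  using break_e unfolding period_break_def by simp

lemma gcd_not_period: "d' < d \<Longrightarrow> \<not> period_on W (gcd d d') 0 d"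
  using primitive[of "gcd d d'"] gcd_bounds by simp

lemma break_end_if_same_period:
  assumes "d' = d"
  shows "e = c + d - 1"
proof (rule ccontr)
  assume "e \<noteq> c + d - 1"
  show False
  proof (cases "d \<le> e")
    case True
    then show False
      using period_0D[of e] break_at_e assms \<open>e \<noteq> c + d - 1\<close> e_range by simp
  next
    case False
    then have "W (-1 - d) = W (-1)" using period_eD[of "-1"] assms c_large e_range by simp
    moreover have "W (-1 - d) = W (c - 1)" using W_add_length[of "-1 - d"] by simp
    ultimately show False using break_at_minus_1 by simp
  qed
qed

lemma same_period_if_break_end:
  assumes "e = c + d - 1"
  shows "d' = d"
proof (rule ccontr)
  assume "d' \<noteq> d"
  then have "d' < d" using d'_le by simp
  define g where "g = gcd d d'"
  have g: "0 < g" "g \<le> d'" using gcd_bounds unfolding g_def by simp_all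
  have "period_on W g (d - d') (c + d - 1)"
    unfolding g_def
  proof (rule fine_wilf)
    show "period_on W d (d - d') (c + d - 1)"
      using period_0 by (rule period_on_subwindow) (use d'_le in simp_all)
    show "period_on W d' (d - d') (c + d - 1)"
      using period_e assms by simp
  qed (use d_pos d'_pos c_large gcd_bounds in linarith)+
  then have "period_on W g 0 d"
    unfolding period_on_def
  proof (intro allI impI)
    fix z assume z: "0 \<le> z" "z + g < d"
    have "W z = W (z + d)" using period_0D[of "z + d"] z g c_large by simp
    also have "\<dots> = W (z + d + g)"
      using period_onD[OF \<open>period_on W g (d - d') (c + d - 1)\<close>, of "z + d"] z c_large d'_pos by simp
    also have "\<dots> = W (z + g)" using period_0D[of "z + g + d"] z g c_large by (simp add: algebra_simps)
    finally show "W z = W (z + g)" .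
  qed
  then show False using gcd_not_period \<open>d' < d\<close> unfolding g_def by simp
qed

text \<open>Otherwise \<open>[0, e)\<close> carries both periods and is long enough for Fine and Wilf.\<close>
lemma break_before_end:
  assumes "d' < d" "e \<noteq> c + d - 1"
  shows "e < d + d' - gcd d d'"
proof -
  define g where "g = gcd d d'"
  have g: "0 < g" "g \<le> d'" using gcd_bounds unfolding g_def by simp_all
  have "e < d + d'"
  proof (rule ccontr)
    assume "\<not> e < d + d'"
    then have "W e = W (e - d)" "W (e - d) = W (e - d - d')" "W (e - d' - d) = W (e - d')"
      using period_0D[of e] period_eD[of "e - d"] period_0D[of "e - d'"] assms e_range c_large d'_pos
      by simp_all
    moreover have "e - d' - d = e - d - d'" by simp
    ultimately show False using break_at_e by simp
  qed
  show ?thesis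
  proof (rule ccontr)
    assume long: "\<not> e < d + d' - gcd d d'"
    have "period_on W g 0 e"
      unfolding g_def
    proof (rule fine_wilf)
      show "period_on W d 0 e"
        using period_0 by (rule period_on_subwindow) (use assms e_range in simp_all)
      show "period_on W d' 0 e"
        using period_e by (rule period_on_subwindow) (use \<open>e < d + d'\<close> c_large in simp_all)
    qed (use d_pos d'_pos long in simp_all)
    then have "period_on W g 0 d"
      by (rule period_on_subwindow) (use long g in \<open>simp_all add: g_def\<close>)
    then show False using gcd_not_period assms unfolding g_def by simp
  qed
qed

text \<open>Otherwise the part \<open>[e - (c + d' - 1), -1)\<close> of the second window, which wraps around
  and hence also has period \<open>d\<close>, is long enough for Fine and Wilf, and then
  \<open>W (-1 - d) = W (-1 - d') = W (-1)\<close>.\<close>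
lemma break_after_start: "c - d - 1 + gcd d d' \<le> e"
proof (rule ccontr)
  define g where "g = gcd d d'"
  have g: "0 < g" "g \<le> d'" "g dvd d - d'" using gcd_bounds unfolding g_def by simp_all
  assume "\<not> ?thesis"
  then have long: "d + d' - g \<le> -1 - (e - (c + d' - 1))" unfolding g_def by simp
  have "period_on W g (e - (c + d' - 1)) (-1)"
    unfolding g_def
  proof (rule fine_wilf)
    have "period_on (\<lambda>z. W (z + (c + d))) d (e - (c + d' - 1)) (-1)"
      unfolding period_on_shift
      using period_0 by (rule period_on_subwindow) (use e_range d'_le in simp_all)
    then show "period_on W d (e - (c + d' - 1)) (-1)" by (simp add: W_add_length)
    show "period_on W d' (e - (c + d' - 1)) (-1)"
      using period_e by (rule period_on_subwindow) (use e_range in simp_all)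
  qed (use d_pos d'_pos long in \<open>simp_all add: g_def\<close>)
  then have "W (-1 - d) = W (-1 - d')"
    by (rule period_on_dvd_diff) (use g long d_pos d'_le in \<open>simp_all add: dvd_diff_commute\<close>)
  moreover have "W (-1 - d') = W (-1)" using period_eD[of "-1"] long g d'_le e_range by simp
  moreover have "W (-1 - d) = W (c - 1)" using W_add_length[of "-1 - d"] by simp
  ultimately show False using break_at_minus_1 by simp
qed

lemma break_not_inside:
  assumes "d' < d" "e \<noteq> c + d - 1"
  shows False
proof -
  have e: "c - d \<le> e" "e \<le> c - 2"
    using break_before_end[OF assms] break_after_start gcd_bounds c_large assms(1)
    by linarith+
  have "W (-1 - d') = W (-1)" using period_eD[of "-1"] e e_range by simp
  moreover have "W (c - 1 - d') = W (-1 - d')"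
    using period_0D[of "c + d - 1 - d'"] W_add_length[of "-1 - d'"] assms c_large d'_pos
    by (simp add: algebra_simps)
  ultimately have break_c: "W (c - 1 - d') \<noteq> W (c - 1)" using break_at_minus_1 by simp
  show False
  proof (cases "d + d' \<le> c - 1")
    case True
    have "W (c - 1 - d) = W (c - 1)" "W (c - 1 - d' - d) = W (c - 1 - d')"
      "W (c - 1 - d - d') = W (c - 1 - d)"
      using period_0D[of "c - 1"] period_0D[of "c - 1 - d'"] period_eD[of "c - 1 - d"] True e d'_pos
      by (simp_all add: algebra_simps)
    then show False using break_c by (simp add: algebra_simps)
  next
    case False
    then have "c = 2 * d - 1" "d' = d - 1" using c_large assms(1) by linarith+
    then have "W (d - 2) = W (-1)" "W (c - 1 - d) = W (c - 1)"
      using period_eD[of "d - 2"] period_0D[of "c - 1"] e d'_pos by simp_all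
    moreover have "c - 1 - d = d - 2" using \<open>c = 2 * d - 1\<close> by simp
    ultimately show False using break_at_minus_1 by simp
  qed
qed

theorem break_unique: "d' = d \<and> e = c + d - 1"
proof (cases "d' = d")
  case True
  then show ?thesis using break_end_if_same_period by simp
next
  case False
  then have "d' < d" using d'_le by simp
  then show ?thesis
    using same_period_if_break_end break_not_inside by blast
qed

end

definition cyclic_word :: "'a list \<Rightarrow> int \<Rightarrow> 'a" where
  "cyclic_word s z = s ! nat (z mod int (length s))"

lemma cyclic_word_nth: "i < length s \<Longrightarrow> cyclic_word s (int i) = s ! i"
  unfolding cyclic_word_def by (simp flip: of_nat_mod)

lemma cyclic_word_cong:
  "z mod int (length s) = z' mod int (length s) \<Longrightarrow> cyclic_word s z = cyclic_word s z'"
  unfolding cyclic_word_def by simp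

lemma length_rshift: "k \<le> length s \<Longrightarrow> length (rshift k s) = length s"
  unfolding rshift_def by simp

lemma nth_rshift:
  assumes "k < length s" "i < length s"
  shows "rshift k s ! i = s ! ((i + (length s - k)) mod length s)"
proof (cases "i < k")
  case True
  then have "(i + (length s - k)) mod length s = length s - k + i" using assms by simp
  then show ?thesis using True assms unfolding rshift_def by (simp add: nth_append)
next
  case False
  then have "(i + (length s - k)) mod length s = i - k" using assms by (simp add: le_mod_geq)
  then show ?thesis using False assms unfolding rshift_def by (simp add: nth_append)
qed

lemma cyclic_word_rshift:
  assumes "k < length s"
  shows "cyclic_word (rshift k s) z = cyclic_word s (z - int k)"
proof -
  define n where "n = length s"
  define i where "i = nat (z mod int n)"
  have n: "0 < n" "length (rshift k s) = n"
    using assms length_rshift[of k s] unfolding n_def by linarith+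
  have i: "int i = z mod int n" "i < n" using n unfolding i_def by (simp_all add: nat_less_iff)
  have "int ((i + (n - k)) mod n) = ((z mod int n - int k) + int n) mod int n"
    using assms i(1) unfolding n_def by (simp add: of_nat_mod of_nat_diff algebra_simps)
  also have "\<dots> = (z - int k) mod int n" by (simp add: mod_diff_left_eq)
  finally have "int ((i + (n - k)) mod n) = (z - int k) mod int n" .
  then have "nat ((z - int k) mod int n) = (i + (n - k)) mod n" by linarith
  then show ?thesis
    using nth_rshift[OF assms i(2)[unfolded n_def]] n
    unfolding cyclic_word_def i_def n_def by simp
qed

lemma cyclic_word_rshift_shift:
  assumes "k < length s" "int (length s) dvd t + int k"
  shows "cyclic_word (rshift k s) z = cyclic_word s (z + t)"
proof -
  have "(z - int k) - (z + t) = - (t + int k)" by simp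
  then have "int (length s) dvd (z - int k) - (z + t)" using assms(2) by (simp only: dvd_minus_iff)
  then have "cyclic_word s (z - int k) = cyclic_word s (z + t)"
    by (intro cyclic_word_cong) (simp only: mod_eq_dvd_iff)
  then show ?thesis using cyclic_word_rshift[OF assms(1)] by simp
qed

lemma nth_concat_replicate:
  "i < k * length xs \<Longrightarrow> concat (replicate k xs) ! i = xs ! (i mod length xs)"
proof (induction k arbitrary: i)
  case (Suc k)
  show ?case
  proof (cases "i < length xs")
    case False
    then have "concat (replicate k xs) ! (i - length xs) = xs ! ((i - length xs) mod length xs)"
      using Suc by auto
    then show ?thesis using False by (simp add: nth_append le_mod_geq)
  qed (simp add: nth_append)
qed simp

lemma length_concat_replicate: "length (concat (replicate l xs)) = l * length xs"
  by (induction l) auto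

lemma period_on_cyclic_word_power:
  assumes tail: "drop d s = concat (replicate l u)" and "d \<le> length s"
  shows "period_on (cyclic_word s) (int (length u)) (int d) (int (length s))"
proof -
  have len: "length s - d = l * length u"
    using arg_cong[OF tail, of length] by (simp add: length_concat_replicate)
  have tail_nth: "s ! (d + j) = u ! (j mod length u)" if "d + j < length s" for j
  proof -
    have "s ! (d + j) = drop d s ! j" using \<open>d \<le> length s\<close> by simp
    also have "\<dots> = u ! (j mod length u)"
      unfolding tail using that len by (intro nth_concat_replicate) simp
    finally show ?thesis .
  qed
  show ?thesis
    unfolding period_on_def
  proof (intro allI impI)
    fix z assume z: "int d \<le> z" "z + int (length u) < int (length s)"
    define j where "j = nat z - d"
    have j: "z = int (d + j)" "d + (j + length u) < length s" using z unfolding j_def by linarith+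
    have "cyclic_word s z = u ! (j mod length u)"
      using cyclic_word_nth[of "d + j" s] tail_nth[of j] j by simp
    moreover have "cyclic_word s (z + int (length u)) = u ! ((j + length u) mod length u)"
      using cyclic_word_nth[of "d + (j + length u)" s] tail_nth[of "j + length u"] j
      by (simp add: algebra_simps)
    ultimately show "cyclic_word s z = cyclic_word s (z + int (length u))" by simp
  qed
qed

lemma periodicI:
  assumes e: "0 < e" "e < length xs" "e dvd length xs"
    and shift: "\<And>i. i + e < length xs \<Longrightarrow> xs ! i = xs ! (i + e)"
  shows "periodic xs"
proof -
  have mod: "xs ! i = xs ! (i mod e)" if "i < length xs" for i
    using that
  proof (induction i rule: less_induct)
    case (less i)
    show ?case
    proof (cases "i < e")
      case False
      then have "xs ! (i - e) = xs ! i" using shift[of "i - e"] less.prems by simp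
      moreover have "xs ! (i - e) = xs ! ((i - e) mod e)" using less False e(1) by simp
      ultimately show ?thesis using False by (simp add: le_mod_geq)
    qed simp
  qed
  have "xs = concat (replicate (length xs div e) (take e xs))"
    using e by (intro nth_equalityI) (simp_all add: length_concat_replicate nth_concat_replicate mod)
  then show ?thesis unfolding periodic_def using e by blast
qed

lemma aperiodic_no_proper_period:
  assumes "aperiodic (take d s)" "d \<le> length s" "0 < g" "g < int d" "g dvd int d"
  shows "\<not> period_on (cyclic_word s) g 0 (int d)"
proof
  assume per: "period_on (cyclic_word s) g 0 (int d)"
  have "periodic (take d s)"
  proof (rule periodicI)
    show "0 < nat g" "nat g < length (take d s)" "nat g dvd length (take d s)"
      using assms by (simp_all add: nat_dvd_iff min_def)
    fix i assume i: "i + nat g < length (take d s)"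
    then have "cyclic_word s (int i) = cyclic_word s (int i + g)"
      using assms by (intro period_onD[OF per]) simp_all
    then show "take d s ! i = take d s ! (i + nat g)"
      using i assms cyclic_word_nth[of i s] cyclic_word_nth[of "i + nat g" s] by simp
  qed
  then show False using assms(1) unfolding aperiodic_def by simp
qed

lemma Bd_params:
  assumes "s \<in> Bd n c d"
  shows "length s = n" "1 \<le> d" "d \<le> n - c" "d \<le> n div 2" "n div 2 \<le> c" "aperiodic (take d s)"
  using assms unfolding Bd_def by simp_all

lemma Bd_structure:
  assumes "s \<in> Bd n c d" "1 \<le> c"
  shows "\<And>i. i < c + d - 1 \<Longrightarrow> s ! i = s ! (i mod d)" "s ! (c + d - 1) \<noteq> s ! (c - 1)"
proof -
  define q where "q = (c + d - 1) div d"
  define r where "r = (c + d - 1) mod d"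
  define u where "u = take d s"
  have d: "1 \<le> d" "length s = n" "c + d \<le> n" using Bd_params[OF assms(1)] assms(2) by simp_all
  have r: "r < d" "q * d + r = c + d - 1" "(c - 1) mod d = r"
  proof -
    show "r < d" "q * d + r = c + d - 1" using d unfolding q_def r_def by simp_all
    have "c + d - 1 = (c - 1) + d" using assms(2) by simp
    then show "(c - 1) mod d = r" unfolding r_def by simp
  qed
  have "take (c + d) s = concat (replicate q u) @ take (c + d - 1 - q * d) s @ [\<not> s ! (c + d - 1 - q * d)]"
    using assms(1) unfolding Bd_def Let_def q_def u_def by simp
  moreover have "c + d - 1 - q * d = r" using r(2) by simp
  ultimately have take_cd: "take (c + d) s = concat (replicate q u) @ take r s @ [\<not> s ! r]" by simp
  have lu: "length (concat (replicate q u)) = q * d" "length (take r s) = r"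
    using d r unfolding u_def by (simp_all add: length_concat_replicate)
  have nth_s: "s ! i = (concat (replicate q u) @ take r s @ [\<not> s ! r]) ! i" if "i < c + d" for i
    using that by (metis take_cd nth_take)
  show periodic: "s ! i = s ! (i mod d)" if i: "i < c + d - 1" for i
  proof (cases "i < q * d")
    case True
    then show ?thesis
      using nth_s[of i] i lu d unfolding u_def by (simp add: nth_append nth_concat_replicate)
  next
    case False
    have "i = q * d + (i - q * d)" "i - q * d < r" using False i r by linarith+
    then have "i mod d = i - q * d" using r(1) by (metis mod_less mod_mult_self3 order.strict_trans)
    then show ?thesis using nth_s[of i] i False lu r d \<open>i - q * d < r\<close> by (simp add: nth_append)
  qed
  have "q * d + r < c + d" using r(2) d(1) by linarith
  from nth_s[OF this] have "s ! (q * d + r) = (\<not> s ! r)" using lu by (simp add: nth_append)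
  then have "s ! (c + d - 1) = (\<not> s ! r)" using r(2) by simp
  moreover have "s ! (c - 1) = s ! r" using periodic[of "c - 1"] r d assms(2) by simp
  ultimately show "s ! (c + d - 1) \<noteq> s ! (c - 1)" by simp
qed

lemma Bd_period_break:
  assumes "s \<in> Bd n c d" "1 \<le> c"
  shows "period_break (cyclic_word s) (int d) 0 (int c + int d - 1)"
proof -
  have len: "length s = n" "c + d \<le> n" using Bd_params[OF assms(1)] assms(2) by simp_all
  note prefix = Bd_structure[OF assms]
  have "period_on (cyclic_word s) (int d) 0 (int c + int d - 1)"
    unfolding period_on_def
  proof (intro allI impI)
    fix z assume z: "0 \<le> z" "z + int d < int c + int d - 1"
    define i where "i = nat z"
    have "s ! i = s ! (i + d)"
      using prefix(1)[of i] prefix(1)[of "i + d"] z unfolding i_def by simp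
    then show "cyclic_word s z = cyclic_word s (z + int d)"
      using z len cyclic_word_nth[of i s] cyclic_word_nth[of "i + d" s] unfolding i_def by simp
  qed
  moreover have "cyclic_word s (int c + int d - 1) \<noteq> cyclic_word s (int c + int d - 1 - int d)"
    using prefix(2) len assms(2)
      cyclic_word_nth[of "c + d - 1" s] cyclic_word_nth[of "c - 1" s] by (simp add: of_nat_diff)
  ultimately show ?thesis unfolding period_break_def by simp
qed

lemma Bd_rotation_unique:
  assumes s: "s \<in> Bd n c d" and a: "rshift k s \<in> Bd n c d'"
    and d: "d = n - c" "2 * d \<le> c + 1" and c: "2 \<le> c" and k: "k < n"
  shows "d' = d \<and> k = 0"
proof -
  have len: "length s = n" "n = c + d" using Bd_params[OF s] d by simp_all
  have d': "1 \<le> d'" "d' \<le> d" using Bd_params[OF a] d by simp_all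
  define W where "W = cyclic_word s"
  \<comment> \<open>the break of \<open>rshift k s\<close> at index \<open>c + d' - 1\<close> sits at position \<open>e\<close> of \<open>s\<close>\<close>
  define e where "e = (int c + int d' - 1 - int k) mod int n"
  have shift: "cyclic_word (rshift k s) = (\<lambda>z. W (z + (e - (int c + int d' - 1))))"
  proof
    have "int n dvd (int c + int d' - 1 - int k) - e" unfolding e_def by (rule dvd_minus_mod)
    then have "int (length s) dvd e - (int c + int d' - 1) + int k"
      using len by (simp add: dvd_diff_commute algebra_simps)
    then show "cyclic_word (rshift k s) z = W (z + (e - (int c + int d' - 1)))" for z
      using cyclic_word_rshift_shift[of k s] k len unfolding W_def by simp
  qed
  interpret period_break_pair W "int c" "int d" "int d'" e
  proof
    show "W (z mod (int c + int d)) = W z" for z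
      using cyclic_word_cong[of "z mod (int c + int d)" s z] len unfolding W_def by simp
    show "0 < int d'" "int d' \<le> int d" using d' by simp_all
    show "2 * int d - 1 \<le> int c" "int d < int c" using d c by linarith+
    show "period_break W (int d) 0 (int c + int d - 1)"
      using Bd_period_break[OF s] c unfolding W_def by simp
    have "period_break (cyclic_word (rshift k s)) (int d') 0 (int c + int d' - 1)"
      using Bd_period_break[OF a] c by simp
    then show "period_break W (int d') (e - (int c + int d' - 1)) e"
      unfolding shift period_break_shift by simp
    show "\<not> period_on W g 0 (int d)" if "0 < g" "g < int d" "g dvd int d" for g
      using aperiodic_no_proper_period[OF Bd_params(6)[OF s]] that len unfolding W_def by simp
    show "0 \<le> e" "e < int c + int d" using len c unfolding e_def by simp_all
  qed
  have "d' = d" "e = int c + int d - 1" using break_unique by simp_all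
  moreover have "(int c + int d - 1 - int k) mod int n = int c + int d - 1 - int k"
    using k len c by (intro mod_pos_pos_trivial) simp_all
  ultimately show ?thesis using len unfolding e_def by simp
qed

lemma Bd_tail_not_power:
  assumes s: "s \<in> Bd n c d" and d: "d = n - c" "2 * d \<le> c + 1"
    and b: "1 < b" "b < c" and tail: "drop d s = concat (replicate l (take b s))"
  shows False
proof -
  have len: "length s = n" "n = c + d" "1 \<le> d" using Bd_params[OF s] d by simp_all
  define W where "W = cyclic_word s"
  have "l * b = c" using arg_cong[OF tail, of length] len b by (simp add: length_concat_replicate)
  have "2 \<le> l"
  proof (rule ccontr)
    assume "\<not> 2 \<le> l"
    then have "l = 0 \<or> l = 1" by linarith
    then show False using \<open>l * b = c\<close> b by auto
  qed
  then have "2 * b \<le> l * b" by (rule mult_le_mono1)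
  then have "2 * b \<le> c" using \<open>l * b = c\<close> by simp
  have period_b: "period_on W (int b) (int d) (int n)"
    using period_on_cyclic_word_power[OF tail] len b unfolding W_def by simp
  have break: "period_break W (int d) 0 (int c + int d - 1)"
    using Bd_period_break[OF s] b unfolding W_def by simp
  have g: "0 < gcd (int b) (int d)" "gcd (int b) (int d) dvd int d - int b" using b by simp_all
  have "period_on W (gcd (int b) (int d)) (int d) (int n - 1)"
  proof (rule fine_wilf)
    show "period_on W (int b) (int d) (int n - 1)"
      using period_b by (rule period_on_subwindow) simp_all
    have "period_on W (int d) 0 (int c + int d - 1)"
      using break unfolding period_break_def by simp
    then show "period_on W (int d) (int d) (int n - 1)"
      by (rule period_on_subwindow) (simp_all add: len)
  qed (use b len d \<open>2 * b \<le> c\<close> g in linarith)+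
  then have "W (int n - 1 - int b) = W (int n - 1 - int d)"
    by (rule period_on_dvd_diff) (use g b len d(2) in \<open>simp_all add: dvd_diff_commute\<close>)
  moreover have "W (int n - 1 - int b) = W (int n - 1)"
    using period_onD[OF period_b, of "int n - 1 - int b"] b len by simp
  ultimately show False using break len unfolding period_break_def by simp
qed

lemma Bd_mem_R:
  assumes s: "s \<in> Bd n c d" and d: "d = n - c" "2 * d \<le> c + 1"
  shows "s \<in> R n c"
proof -
  have len: "length s = n" "n = c + d" "1 \<le> d" "1 \<le> c" using Bd_params[OF s] d by simp_all
  have "s \<in> B n c" unfolding B_def by (rule UN_I[of d]) (use s Bd_params[OF s] in auto)
  moreover have "add d2 a \<le> add d1 s"
    if a: "a \<in> E n c s" and d1: "s \<in> Bd n c d1" and d2: "a \<in> Bd n c d2" for a d1 d2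
  proof -
    obtain k where k: "k < n" "a = rshift k s" using a unfolding E_def by blast
    show ?thesis
    proof (cases "c = 1")
      \<comment> \<open>both rotations of \<open>[x, \<not> x]\<close> lie in \<open>B(2, 1, 1)\<close>, but each has \<open>add = 0\<close>\<close>
      case True
      then have "n = 2" "d2 = 1" using len d(2) Bd_params[OF d2] by simp_all
      moreover have "a ! 1 \<noteq> a ! 0" using Bd_structure(2)[OF d2] True \<open>d2 = 1\<close> by simp
      ultimately have "add d2 a = 0"
        unfolding add_def using Bd_params(1)[OF d2] by (intro Least_eq_0) simp
      then show ?thesis by simp
    next
      case False
      then have c: "2 \<le> c" using len by simp
      have rshift_0: "rshift 0 s = s" by (simp add: rshift_def)
      have "d2 = d \<and> k = 0" using Bd_rotation_unique[OF s _ d c k(1)] d2 k(2) by simp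
      moreover have "d1 = d" using Bd_rotation_unique[OF s _ d c, of 0 d1] d1 rshift_0 len by simp
      ultimately show ?thesis using k(2) rshift_0 by simp
    qed
  qed
  ultimately show ?thesis unfolding R_def by blast
qed

theorem proposition1:
  fixes n c :: nat and s :: "bool list"
  assumes "3 * int c \<ge> 2 * int n - 1"
    and "s \<in> Bd n c (n - c)"
  shows "s \<in> R n c \<longleftrightarrow>
    \<not> (\<exists>b l. 1 < b \<and> b < c \<and> b dvd c \<and> aperiodic (take b s) \<and>
          drop (n - c) s = concat (replicate l (take b s)))"
proof -
  have d: "2 * (n - c) \<le> c + 1" using assms Bd_params[OF assms(2)] by linarith
  have "s \<in> R n c" by (rule Bd_mem_R[OF assms(2) refl d])
  moreover have "\<not> (\<exists>b l. 1 < b \<and> b < c \<and> drop (n - c) s = concat (replicate l (take b s)))"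
    using Bd_tail_not_power[OF assms(2) refl d] by blast
  ultimately show ?thesis by blast
qed

end
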